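(* For every $k\geq1$, a word of $\widetilde A'_k$ and a word of $\widetilde B'_k$ never overlap (in either order, for any shift $0<s<\ell'_k$). Similarly, for every $k\geq0$, a word of $\widetilde A_k$ and a word of $\widetilde B_k$ never overlap (in either order, for any shift $0<s<\ell_k$).
   Context: Alphabet $\{0,1,2\}$. Let $(N_k)_{k\geq1}$ be integers with $N_k\geq4$, $\ell_0=2$, $\ell_k=N_k\ell_{k-1}$; let $N'_k\geq2$ be integers dividing $N_k$ with $N_k/N'_k\geq2$, and $\ell'_k=N'_k\ell_{k-1}$. Words: $a_0=01$, $b_0=02$; for odd $k\geq1$, $a_k=(a_{k-1})^{N_k}$ and $b_k=b_{k-1}2^{(N_k-2)\ell_{k-1}}b_{k-1}$; for even $k\geq2$, $a_k=a_{k-1}1^{(N_k-2)\ell_{k-1}}a_{k-1}$ and $b_k=(b_{k-1})^{N_k}$. $\widetilde A_k=\{a_k,1^{\ell_k}\}$, $\widetilde B_k=\{b_k,2^{\ell_k}\}$. Intermediate dictionaries: for odd $k$, $\widetilde A'_k=\{a'_k,1^{\ell'_k}\}$ with $a'_k=(a_{k-1})^{N'_k}$, and $\widetilde B'_k=\{b'_k,b''_k,2^{\ell'_k}\}$ with $b'_k=b_{k-1}2^{(N'_k-1)\ell_{k-1}}$, $b''_k=2^{(N'_k-1)\ell_{k-1}}b_{k-1}$; for even $k$, $\widetilde A'_k=\{a'_k,a''_k,1^{\ell'_k}\}$ with $a'_k=a_{k-1}1^{(N'_k-1)\ell_{k-1}}$, $a''_k=1^{(N'_k-1)\ell_{k-1}}a_{k-1}$,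 and $\widetilde B'_k=\{b'_k,2^{\ell'_k}\}$ with $b'_k=(b_{k-1})^{N'_k}$. Two words $u,v$ of the same length $\ell$ are said to overlap, with $u$ followed by $v$ at shift $s$ ($0<s<\ell$), if the terminal segment of length $\ell-s$ of $u$ equals the initial segment of length $\ell-s$ of $v$. *)

theory Defs
  imports Main
begin

text \<open>Words over the alphabet {0,1,2} are lists of naturals.
  N is the sequence (N_k), N' the sequence (N'_k); only indices k >= 1 matter.\<close>

fun ell :: "(nat \<Rightarrow> nat) \<Rightarrow> nat \<Rightarrow> nat" where
  "ell N 0 = 2"
| "ell N (Suc k) = N (Suc k) * ell N k"

definition ellp :: "(nat \<Rightarrow> nat) \<Rightarrow> (nat \<Rightarrow> nat) \<Rightarrow> nat \<Rightarrow> nat" where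
  "ellp N N' k = N' k * ell N (k - 1)"

fun aw :: "(nat \<Rightarrow> nat) \<Rightarrow> nat \<Rightarrow> nat list" where
  "aw N 0 = [0, 1]"
| "aw N (Suc k) = (if odd (Suc k) then concat (replicate (N (Suc k)) (aw N k))
     else aw N k @ replicate ((N (Suc k) - 2) * ell N k) 1 @ aw N k)"

fun bw :: "(nat \<Rightarrow> nat) \<Rightarrow> nat \<Rightarrow> nat list" where
  "bw N 0 = [0, 2]"
| "bw N (Suc k) = (if odd (Suc k) then bw N k @ replicate ((N (Suc k) - 2) * ell N k) 2 @ bw N k
     else concat (replicate (N (Suc k)) (bw N k)))"

definition Adict :: "(nat \<Rightarrow> nat) \<Rightarrow> nat \<Rightarrow> nat list set" where
  "Adict N k = {aw N k, replicate (ell N k) 1}"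

definition Bdict :: "(nat \<Rightarrow> nat) \<Rightarrow> nat \<Rightarrow> nat list set" where
  "Bdict N k = {bw N k, replicate (ell N k) 2}"

definition Adict' :: "(nat \<Rightarrow> nat) \<Rightarrow> (nat \<Rightarrow> nat) \<Rightarrow> nat \<Rightarrow> nat list set" where
  "Adict' N N' k = (if odd k
     then {concat (replicate (N' k) (aw N (k - 1))), replicate (ellp N N' k) 1}
     else {aw N (k - 1) @ replicate ((N' k - 1) * ell N (k - 1)) 1,
           replicate ((N' k - 1) * ell N (k - 1)) 1 @ aw N (k - 1),
           replicate (ellp N N' k) 1})"

definition Bdict' :: "(nat \<Rightarrow> nat) \<Rightarrow> (nat \<Rightarrow> nat) \<Rightarrow> nat \<Rightarrow> nat list set" where
  "Bdict' N N' k = (if odd k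
     then {bw N (k - 1) @ replicate ((N' k - 1) * ell N (k - 1)) 2,
           replicate ((N' k - 1) * ell N (k - 1)) 2 @ bw N (k - 1),
           replicate (ellp N N' k) 2}
     else {concat (replicate (N' k) (bw N (k - 1))), replicate (ellp N N' k) 2})"

definition overlap_at :: "nat list \<Rightarrow> nat list \<Rightarrow> nat \<Rightarrow> bool" where
  "overlap_at u v s \<longleftrightarrow> length u = length v \<and> 0 < s \<and> s < length u \<and>
     drop s u = take (length u - s) v"

end

theory Submission
  imports Defs
begin

text \<open>An overlap of u followed by v makes the last letter of u occur in v. Every word of an
  A-dictionary ends in 1 and avoids 2, every word of a B-dictionary ends in 2 and avoids 1,
  so no overlap is possible in either order.\<close>

lemma last_concat_replicate:
  "concat (replicate n w) \<noteq> [] \<Longrightarrow> last (concat (replicate n w)) = last w"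
  by (induction n) (auto simp: last_append)

lemma not_overlap_at_if_last_notin:
  assumes "u \<noteq> [] \<Longrightarrow> last u \<notin> set v"
  shows "\<not> overlap_at u v s"
proof
  assume "overlap_at u v s"
  then have s: "s < length u" and eq: "drop s u = take (length u - s) v"
    by (auto simp: overlap_at_def)
  have "u \<noteq> []" and "drop s u \<noteq> []"
    using s by auto
  have "last u = last (drop s u)"
    using s by simp
  also have "\<dots> \<in> set (drop s u)"
    using \<open>drop s u \<noteq> []\<close> by (rule last_in_set)
  also have "\<dots> \<subseteq> set v"
    using eq by (simp add: set_take_subset)
  finally show False
    using assms \<open>u \<noteq> []\<close> by blast
qed

lemma set_aw: "set (aw N k) \<subseteq> {0, 1}"
  by (induction k) auto

lemma set_bw: "set (bw N k) \<subseteq> {0, 2}"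
  by (induction k) auto

lemma last_aw: "aw N k \<noteq> [] \<Longrightarrow> last (aw N k) = 1"
  by (induction k) (auto simp: last_concat_replicate last_append split: if_splits)

lemma last_bw: "bw N k \<noteq> [] \<Longrightarrow> last (bw N k) = 2"
  by (induction k) (auto simp: last_concat_replicate last_append split: if_splits)

lemma letters_of_Adict_words:
  assumes "u \<in> Adict N k \<union> Adict' N N' k"
  shows "2 \<notin> set u" and "u \<noteq> [] \<Longrightarrow> last u = 1"
proof -
  have "2 \<notin> set (aw N j)" for j
    using set_aw[of N j] by auto
  with assms show "2 \<notin> set u"
    by (auto simp: Adict_def Adict'_def split: if_split_asm)
  show "last u = 1" if "u \<noteq> []"
    using assms that last_aw[of N k] last_aw[of N "k - 1"]
    by (cases "aw N (k - 1) = []")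
       (auto simp: Adict_def Adict'_def last_append last_concat_replicate split: if_split_asm)
qed

lemma letters_of_Bdict_words:
  assumes "v \<in> Bdict N k \<union> Bdict' N N' k"
  shows "1 \<notin> set v" and "v \<noteq> [] \<Longrightarrow> last v = 2"
proof -
  have "1 \<notin> set (bw N j)" for j
    using set_bw[of N j] by auto
  with assms show "1 \<notin> set v"
    by (auto simp: Bdict_def Bdict'_def split: if_split_asm)
  show "last v = 2" if "v \<noteq> []"
    using assms that last_bw[of N k] last_bw[of N "k - 1"]
    by (cases "bw N (k - 1) = []")
       (auto simp: Bdict_def Bdict'_def last_append last_concat_replicate split: if_split_asm)
qed

lemma Adict_Bdict_no_overlap:
  assumes u: "u \<in> Adict N k \<union> Adict' N N' k" and v: "v \<in> Bdict N k \<union> Bdict' N N' k"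
  shows "\<not> overlap_at u v s" and "\<not> overlap_at v u s"
proof -
  show "\<not> overlap_at u v s"
    using letters_of_Adict_words(2)[OF u] letters_of_Bdict_words(1)[OF v]
    by (intro not_overlap_at_if_last_notin) auto
  show "\<not> overlap_at v u s"
    using letters_of_Bdict_words(2)[OF v] letters_of_Adict_words(1)[OF u]
    by (intro not_overlap_at_if_last_notin) auto
qed

theorem lemma3p2:
  fixes N N' :: "nat \<Rightarrow> nat"
  assumes hN: "\<And>k. k \<ge> 1 \<Longrightarrow> N k \<ge> 4"
      and hN': "\<And>k. k \<ge> 1 \<Longrightarrow> N' k \<ge> 2"
      and hdvd: "\<And>k. k \<ge> 1 \<Longrightarrow> N' k dvd N k"
      and hquot: "\<And>k. k \<ge> 1 \<Longrightarrow> N k div N' k \<ge> 2"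
  shows "(\<forall>k\<ge>1. \<forall>u\<in>Adict' N N' k. \<forall>v\<in>Bdict' N N' k. \<forall>s. 0 < s \<and> s < ellp N N' k \<longrightarrow>
            \<not> overlap_at u v s \<and> \<not> overlap_at v u s)
       \<and> (\<forall>k. \<forall>u\<in>Adict N k. \<forall>v\<in>Bdict N k. \<forall>s. 0 < s \<and> s < ell N k \<longrightarrow>
            \<not> overlap_at u v s \<and> \<not> overlap_at v u s)"
  by (intro conjI allI ballI impI; meson Adict_Bdict_no_overlap UnI1 UnI2)

end
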